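(* For every $n\ge1$, $$\sum_{\sigma\in\mathfrak S_n}u^{{\rm M}(\sigma)}v^{{\rm des}(\sigma)}w^{{\rm asc}(\sigma)}\alpha^{{\rm LRmin}(\sigma)+{\rm RLmin}(\sigma)-2}=\sum_{\sigma\in\mathfrak S_n}x^{{\rm des}(\sigma)}y^{{\rm asc}(\sigma)}\alpha^{{\rm LRmin}(\sigma)+{\rm RLmin}(\sigma)-2},$$ where $x=\frac{(w+v)-\sqrt{(w+v)^2-4uvw}}{2}$ and $y=\frac{(w+v)+\sqrt{(w+v)^2-4uvw}}{2}$.
   Context: For $\sigma=\sigma_1\cdots\sigma_n\in\mathfrak S_n$: ${\rm asc}(\sigma)$, ${\rm des}(\sigma)$ are the numbers of $i\in[n-1]$ with $\sigma_i<\sigma_{i+1}$, resp. $\sigma_i>\sigma_{i+1}$; ${\rm M}(\sigma)$ is the number of $i$ with $1<i<n$ and $\sigma_{i-1}<\sigma_i>\sigma_{i+1}$; ${\rm LRmin}(\sigma)$ is the number of $i$ with $\sigma_j>\sigma_i$ for all $j<i$; ${\rm RLmin}(\sigma)$ is the number of $i$ with $\sigma_j>\sigma_i$ for all $j>i$. *)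

theory Defs
  imports Complex_Main "HOL-Combinatorics.Multiset_Permutations"
begin

text \<open>A permutation sigma = sigma_1 ... sigma_n of [n] is represented as the list
  [sigma_1, ..., sigma_n] (0-indexed positions); S_n = permutations_of_set {1..n}.\<close>

definition asc :: "nat list \<Rightarrow> nat" where
  "asc s = card {i. i + 1 < length s \<and> s ! i < s ! (i + 1)}"

definition des :: "nat list \<Rightarrow> nat" where
  "des s = card {i. i + 1 < length s \<and> s ! i > s ! (i + 1)}"

definition peaks :: "nat list \<Rightarrow> nat" where
  "peaks s = card {i. 0 < i \<and> i + 1 < length s \<and> s ! (i - 1) < s ! i \<and> s ! i > s ! (i + 1)}"

definition LRmin :: "nat list \<Rightarrow> nat" where
  "LRmin s = card {i. i < length s \<and> (\<forall>j<i. s ! j > s ! i)}"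

definition RLmin :: "nat list \<Rightarrow> nat" where
  "RLmin s = card {i. i < length s \<and> (\<forall>j. i < j \<and> j < length s \<longrightarrow> s ! j > s ! i)}"

end

theory Submission
  imports Defs
begin

(* Write P_n(u,v,w) for the left-hand sum over S_n.  Inserting the maximum n + 1 into one of the
   n + 1 gaps of p in S_n multiplies the weight of p by a factor that depends only on the gap: an end
   gap creates a new left-to-right or right-to-left minimum, an interior gap creates a new peak unless
   the inserted entry destroys a peak next to it.  Summing over the gaps gives
     P_{n+1} = \<Sum>_p W(p) (\<alpha>(v+w) + (v+w-uv-uw) pk(p) + uv asc(p) + uw des(p)),
   and the three statistic-weighted sums are u d/du P_n, w d/dw P_n and v d/dv P_n.  Hence, by
   induction, P_{n+1} = G_n(uvw, v+w) for polynomials G_n satisfying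
     G_{n+1} = \<alpha> Y G_n + X Y dG_n/dX + 2 X dG_n/dY.
   Since x and y are the roots of t^2 - (v+w) t + uvw, we have x + y = v + w and 1 * x * y = uvw,
   so the right-hand side P_{n+1}(1,x,y) equals G_n(uvw, v+w) as well. *)

section \<open>Inserting an element into a list\<close>

definition insert_at :: "nat \<Rightarrow> 'a \<Rightarrow> 'a list \<Rightarrow> 'a list" where
  "insert_at i x xs = take i xs @ x # drop i xs"

lemma length_insert_at [simp]: "i \<le> length xs \<Longrightarrow> length (insert_at i x xs) = Suc (length xs)"
  by (simp add: insert_at_def)

lemma nth_insert_at:
  "i \<le> length xs \<Longrightarrow>
   insert_at i x xs ! j = (if j < i then xs ! j else if j = i then x else xs ! (j - 1))"
  by (auto simp: insert_at_def nth_append min_def nth_Cons')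

lemma set_insert_at [simp]: "set (insert_at i x xs) = insert x (set xs)"
proof -
  have "set (take i xs) \<union> set (drop i xs) = set xs"
    by (metis set_append append_take_drop_id)
  then show ?thesis by (auto simp: insert_at_def)
qed

lemma distinct_insert_at: "distinct (insert_at i x xs) \<longleftrightarrow> x \<notin> set xs \<and> distinct xs"
  using distinct_append[of "take i xs" "drop i xs"] set_append[of "take i xs" "drop i xs"]
  unfolding append_take_drop_id insert_at_def distinct_append distinct.simps set_simps by blast

lemma rev_insert_at:
  "i \<le> length xs \<Longrightarrow> rev (insert_at i x xs) = insert_at (length xs - i) x (rev xs)"
  by (simp add: insert_at_def rev_take rev_drop)

lemma take_Suc_insert_at:
  "i \<le> j \<Longrightarrow> j \<le> length xs \<Longrightarrow> take (Suc j) (insert_at i x xs) = insert_at i x (take j xs)"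
  by (simp add: insert_at_def take_drop min_def Suc_diff_le)

lemma insert_at_length_append [simp]: "insert_at (length xs) x (xs @ ys) = xs @ x # ys"
  by (simp add: insert_at_def)

lemma insert_at_inject:
  assumes "x \<notin> set xs" "x \<notin> set ys" "i \<le> length xs" "j \<le> length ys"
    and "insert_at i x xs = insert_at j x ys"
  shows "i = j \<and> xs = ys"
proof -
  have "x \<notin> set (take i xs)" "x \<notin> set (drop i xs)"
    using assms(1) by (auto dest: in_set_takeD in_set_dropD)
  then have "take i xs = take j ys" "drop i xs = drop j ys"
    using assms(5) append_Cons_eq_iff by (fastforce simp: insert_at_def)+
  then show ?thesis
    using assms(3,4) by (metis append_take_drop_id length_take min.absorb2)
qed

lemma all_less_nth_iff_set_take:
  "j \<le> length xs \<Longrightarrow> (\<forall>k<j. P (xs ! k)) \<longleftrightarrow> (\<forall>z\<in>set (take j xs). P z)"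
  by (simp add: all_set_conv_all_nth)

(* A and B are the positions of a local pattern in a list after and before an entry is inserted
   somewhere in the window [lo, hi]: they agree to the left of it and are shifted by one to the right. *)
lemma card_window_exchange:
  fixes A B :: "nat set"
  assumes fA: "finite A" and fB: "finite B" and lh: "lo \<le> hi"
    and lo: "\<And>j. j < lo \<Longrightarrow> j \<in> A \<longleftrightarrow> j \<in> B"
    and hi: "\<And>j. hi \<le> j \<Longrightarrow> Suc j \<in> A \<longleftrightarrow> j \<in> B"
  shows "card A + card (B \<inter> {lo..<hi}) = card B + card (A \<inter> {lo..hi})"
proof -
  have below: "A \<inter> {..<lo} = B \<inter> {..<lo}" using lo by auto
  have above: "A \<inter> {hi<..} = Suc ` (B \<inter> {hi..})"
  proof
    show "A \<inter> {hi<..} \<subseteq> Suc ` (B \<inter> {hi..})"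
    proof
      fix x assume x: "x \<in> A \<inter> {hi<..}"
      then obtain j where j: "x = Suc j" by (cases x) auto
      with x hi[of j] show "x \<in> Suc ` (B \<inter> {hi..})" by auto
    qed
    show "Suc ` (B \<inter> {hi..}) \<subseteq> A \<inter> {hi<..}" using hi by auto
  qed
  have "card A = card ((A \<inter> {..<lo}) \<union> (A \<inter> {lo..hi})) + card (A \<inter> {hi<..})"
    using fA lh by (subst card_Un_disjoint[symmetric]) (auto intro: arg_cong[where f = card])
  also have "card ((A \<inter> {..<lo}) \<union> (A \<inter> {lo..hi})) = card (A \<inter> {..<lo}) + card (A \<inter> {lo..hi})"
    using fA by (intro card_Un_disjoint) auto
  finally have cA: "card A = card (A \<inter> {..<lo}) + card (A \<inter> {lo..hi}) + card (A \<inter> {hi<..})" .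
  have "card B = card ((B \<inter> {..<lo}) \<union> (B \<inter> {lo..<hi})) + card (B \<inter> {hi..})"
    using fB lh by (subst card_Un_disjoint[symmetric]) (auto intro: arg_cong[where f = card])
  also have "card ((B \<inter> {..<lo}) \<union> (B \<inter> {lo..<hi})) = card (B \<inter> {..<lo}) + card (B \<inter> {lo..<hi})"
    using fB by (intro card_Un_disjoint) auto
  finally have cB: "card B = card (B \<inter> {..<lo}) + card (B \<inter> {lo..<hi}) + card (B \<inter> {hi..})" .
  have "card (A \<inter> {hi<..}) = card (B \<inter> {hi..})"
    unfolding above by (rule card_image) auto
  then show ?thesis using cA cB below by simp
qed

lemma card_Int_eq_sum: "finite S \<Longrightarrow> card (A \<inter> S) = (\<Sum>j\<in>S. if j \<in> A then 1 else 0)"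
proof -
  assume "finite S"
  moreover have "A \<inter> S = {j\<in>S. j \<in> A}" by auto
  ultimately show ?thesis by (simp add: sum.inter_filter[symmetric])
qed

lemma card_Int_atLeastAtMost_window:
  "card ((A::nat set) \<inter> {i-1..i+1}) =
     (if i = 0 then (if 0 \<in> A then 1 else 0) + (if 1 \<in> A then 1 else 0)
      else (if i - 1 \<in> A then 1 else 0) + (if i \<in> A then 1 else 0) + (if Suc i \<in> A then 1 else 0))"
proof (cases "i = 0")
  case True
  then have "{i-1..i+1} = {0, 1}" by auto
  with True show ?thesis by (simp add: card_Int_eq_sum)
next
  case False
  then have "{i-1..i+1} = {i-1, i, Suc i}" "i - 1 \<noteq> i" "i - 1 \<noteq> Suc i" by auto
  with False show ?thesis by (simp add: card_Int_eq_sum)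
qed

lemma card_Int_atLeastLessThan_window:
  "card ((A::nat set) \<inter> {i-1..<i+1}) =
     (if i = 0 then (if 0 \<in> A then 1 else 0)
      else (if i - 1 \<in> A then 1 else 0) + (if i \<in> A then 1 else 0))"
proof (cases "i = 0")
  case True
  then have "{i-1..<i+1} = {0}" by auto
  with True show ?thesis by (simp add: card_Int_eq_sum)
next
  case False
  then have "{i-1..<i+1} = {i-1, i}" "i - 1 \<noteq> i" by auto
  with False show ?thesis by (simp add: card_Int_eq_sum)
qed

lemma card_filter_atLeastLessThan_shift:
  "card {i\<in>{1..<n}. Q (i - 1) i} = card {j. j + 1 < (n::nat) \<and> Q j (j + 1)}"
proof -
  have "{i\<in>{1..<n}. Q (i - 1) i} = Suc ` {j. j + 1 < n \<and> Q j (j + 1)}"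
  proof (rule set_eqI)
    fix i show "i \<in> {i\<in>{1..<n}. Q (i - 1) i} \<longleftrightarrow> i \<in> Suc ` {j. j + 1 < n \<and> Q j (j + 1)}"
      by (cases i) auto
  qed
  then show ?thesis by (simp add: card_image)
qed

lemma sum_if_const:
  "finite S \<Longrightarrow> (\<Sum>i\<in>S. if Q i then c else 0) = of_nat (card {i\<in>S. Q i}) * c"
  by (simp add: sum.inter_filter[symmetric])

section \<open>Permutation statistics under insertion of a new maximum\<close>

lemma asc_add_des:
  assumes "distinct s"
  shows "asc s + des s = length s - 1"
proof -
  let ?A = "{i. i + 1 < length s \<and> s ! i < s ! (i + 1)}"
  let ?D = "{i. i + 1 < length s \<and> s ! i > s ! (i + 1)}"
  have neq: "s ! i \<noteq> s ! (i + 1)" if "i + 1 < length s" for i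
    using assms that by (simp add: nth_eq_iff_index_eq)
  have union: "?A \<union> ?D = {..<length s - 1}"
  proof (rule set_eqI)
    fix i
    show "i \<in> ?A \<union> ?D \<longleftrightarrow> i \<in> {..<length s - 1}"
      using neq[of i] by (cases "s ! i < s ! (i + 1)") (auto simp: less_diff_conv)
  qed
  have "finite ?A" "finite ?D"
    by (rule finite_subset[of _ "{..<length s}"]; auto)+
  then have "card (?A \<union> ?D) = card ?A + card ?D"
    by (rule card_Un_disjoint) auto
  then show ?thesis
    unfolding asc_def des_def union card_lessThan by (rule sym)
qed

definition is_peak :: "nat list \<Rightarrow> nat \<Rightarrow> bool" where
  "is_peak s j \<longleftrightarrow> 0 < j \<and> j + 1 < length s \<and> s ! (j - 1) < s ! j \<and> s ! j > s ! (j + 1)"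

lemma peaks_eq_card_is_peak: "peaks s = card {j. is_peak s j}"
  unfolding peaks_def is_peak_def ..

lemma RLmin_eq_LRmin_rev: "RLmin s = LRmin (rev s)"
proof -
  let ?r = "\<lambda>i. length s - Suc i"
  have "{i. i < length s \<and> (\<forall>j. i < j \<and> j < length s \<longrightarrow> s ! j > s ! i)}
      = ?r ` {i. i < length s \<and> (\<forall>j<i. rev s ! j > rev s ! i)}"
  proof (rule set_eqI, rule iffI)
    fix i assume i: "i \<in> {i. i < length s \<and> (\<forall>j. i < j \<and> j < length s \<longrightarrow> s ! j > s ! i)}"
    have "rev s ! j > rev s ! ?r i" if "j < ?r i" for j
      using i that by (auto simp: rev_nth intro!: i[THEN CollectD, THEN conjunct2, rule_format])
    with i show "i \<in> ?r ` {i. i < length s \<and> (\<forall>j<i. rev s ! j > rev s ! i)}"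
      by (auto intro!: image_eqI[of _ _ "?r i"])
  next
    fix i assume "i \<in> ?r ` {i. i < length s \<and> (\<forall>j<i. rev s ! j > rev s ! i)}"
    then obtain k where k: "k < length s" "\<forall>j<k. rev s ! j > rev s ! k" "i = ?r k" by blast
    have "s ! j > s ! i" if "i < j" "j < length s" for j
      using k(2)[rule_format, of "?r j"] k that by (simp add: rev_nth)
    then show "i \<in> {i. i < length s \<and> (\<forall>j. i < j \<and> j < length s \<longrightarrow> s ! j > s ! i)}"
      using k by auto
  qed
  moreover have "inj_on ?r {i. i < length s \<and> (\<forall>j<i. rev s ! j > rev s ! i)}"
    by (auto simp: inj_on_def)
  ultimately show ?thesis
    unfolding RLmin_def LRmin_def length_rev by (simp add: card_image)
qed

lemma LRmin_pos: "s \<noteq> [] \<Longrightarrow> 0 < LRmin s"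
  unfolding LRmin_def card_gt_0_iff
  by (auto intro: finite_subset[of _ "{..<length s}"])

lemma RLmin_pos: "s \<noteq> [] \<Longrightarrow> 0 < RLmin s"
  by (simp add: RLmin_eq_LRmin_rev LRmin_pos)

lemma asc_insert_at:
  assumes i: "i \<le> length p" and p: "p \<noteq> []" and m: "\<forall>x\<in>set p. x < m"
  shows "asc (insert_at i m p) + (if 0 < i \<and> i < length p \<and> p ! (i-1) < p ! i then 1 else 0)
         = asc p + (if i = 0 then 0 else 1)"
proof -
  define s where "s = insert_at i m p"
  have ls: "length s = Suc (length p)" using i by (simp add: s_def)
  have sn: "s ! j = (if j < i then p ! j else if j = i then m else p ! (j - 1))" for j
    using i by (simp add: s_def nth_insert_at)
  have mlt: "p ! j < m" if "j < length p" for j using m that by auto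
  define A where "A = {j. j + 1 < length s \<and> s ! j < s ! (j + 1)}"
  define B where "B = {j. j + 1 < length p \<and> p ! j < p ! (j + 1)}"
  have "finite A" unfolding A_def by (rule finite_subset[of _ "{..<length s}"]) auto
  moreover have "finite B" unfolding B_def by (rule finite_subset[of _ "{..<length p}"]) auto
  ultimately have window: "card A + card (B \<inter> {i-1..<i+1}) = card B + card (A \<inter> {i-1..i+1})"
    by (rule card_window_exchange) (use i in \<open>auto simp: A_def B_def ls sn\<close>)
  have counts: "asc (insert_at i m p) = card A" "asc p = card B"
    by (simp_all add: s_def A_def B_def asc_def)
  show ?thesis
  proof (cases "i = 0")
    case True
    have "card (A \<inter> {i-1..i+1}) = (if 0 \<in> B then 1 else 0)"
      unfolding card_Int_atLeastAtMost_window using True p mlt[of 0] by (auto simp: A_def B_def ls sn)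
    moreover have "card (B \<inter> {i-1..<i+1}) = (if 0 \<in> B then 1 else 0)"
      unfolding card_Int_atLeastLessThan_window using True by simp
    ultimately show ?thesis unfolding counts using window True by simp
  next
    case False
    have "card (A \<inter> {i-1..i+1}) = 1 + (if i \<in> B then 1 else 0)"
      unfolding card_Int_atLeastAtMost_window using False i mlt[of i] mlt[of "i-1"]
      by (auto simp: A_def B_def ls sn)
    moreover have "card (B \<inter> {i-1..<i+1}) = (if i - 1 \<in> B then 1 else 0) + (if i \<in> B then 1 else 0)"
      unfolding card_Int_atLeastLessThan_window using False by simp
    moreover have "i - 1 \<in> B \<longleftrightarrow> i < length p \<and> p ! (i-1) < p ! i"
      using False i by (auto simp: B_def)
    ultimately show ?thesis unfolding counts using window False by simp
  qed
qed

lemma peaks_insert_at: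
  assumes i: "i \<le> length p" and p: "p \<noteq> []" and m: "\<forall>x\<in>set p. x < m"
  shows "peaks (insert_at i m p) + (if 0 < i \<and> is_peak p (i-1) then 1 else 0)
          + (if 0 < i \<and> is_peak p i then 1 else 0)
         = peaks p + (if 0 < i \<and> i < length p then 1 else 0)"
proof -
  define s where "s = insert_at i m p"
  have ls: "length s = Suc (length p)" using i by (simp add: s_def)
  have sn: "s ! j = (if j < i then p ! j else if j = i then m else p ! (j - 1))" for j
    using i by (simp add: s_def nth_insert_at)
  have mlt: "p ! j < m" if "j < length p" for j using m that by auto
  define A where "A = {j. is_peak s j}"
  define B where "B = {j. is_peak p j}"
  have "finite A" unfolding A_def is_peak_def by (rule finite_subset[of _ "{..<length s}"]) auto
  moreover have "finite B" unfolding B_def is_peak_def by (rule finite_subset[of _ "{..<length p}"]) auto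
  ultimately have window: "card A + card (B \<inter> {i-1..<i+1}) = card B + card (A \<inter> {i-1..i+1})"
    by (rule card_window_exchange) (use i in \<open>auto simp: A_def B_def is_peak_def ls sn\<close>)
  have counts: "peaks (insert_at i m p) = card A" "peaks p = card B"
    by (simp_all add: s_def A_def B_def peaks_eq_card_is_peak)
  show ?thesis
  proof (cases "i = 0")
    case True
    have "card (A \<inter> {i-1..i+1}) = 0"
      unfolding card_Int_atLeastAtMost_window using True p mlt[of 0] by (auto simp: A_def is_peak_def ls sn)
    moreover have "card (B \<inter> {i-1..<i+1}) = 0"
      unfolding card_Int_atLeastLessThan_window using True by (simp add: B_def is_peak_def)
    ultimately show ?thesis unfolding counts using window True by simp
  next
    case False
    have "card (A \<inter> {i-1..i+1}) = (if i < length p then 1 else 0)"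
      unfolding card_Int_atLeastAtMost_window using False i mlt[of i] mlt[of "i-1"]
      by (auto simp: A_def is_peak_def ls sn)
    moreover have "card (B \<inter> {i-1..<i+1}) = (if i - 1 \<in> B then 1 else 0) + (if i \<in> B then 1 else 0)"
      unfolding card_Int_atLeastLessThan_window using False by simp
    ultimately show ?thesis unfolding counts using window False by (simp add: B_def)
  qed
qed

lemma LRmin_insert_at:
  assumes i: "i \<le> length p" and m: "\<forall>x\<in>set p. x < m"
  shows "LRmin (insert_at i m p) = LRmin p + (if i = 0 then 1 else 0)"
proof -
  define s where "s = insert_at i m p"
  have ls: "length s = Suc (length p)" using i by (simp add: s_def)
  have sn: "s ! j = (if j < i then p ! j else if j = i then m else p ! (j - 1))" for j
    using i by (simp add: s_def nth_insert_at)
  define A where "A = {j. j < length s \<and> (\<forall>k<j. s ! k > s ! j)}"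
  define B where "B = {j. j < length p \<and> (\<forall>k<j. p ! k > p ! j)}"
  have "finite A" unfolding A_def by (rule finite_subset[of _ "{..<length s}"]) auto
  moreover have "finite B" unfolding B_def by (rule finite_subset[of _ "{..<length p}"]) auto
  ultimately have window: "card A + card (B \<inter> {i..<i}) = card B + card (A \<inter> {i..i})"
  proof (rule card_window_exchange)
    show "j \<in> A \<longleftrightarrow> j \<in> B" if "j < i" for j
      using that i by (auto simp: A_def B_def ls sn)
    show "Suc j \<in> A \<longleftrightarrow> j \<in> B" if "i \<le> j" for j
    proof (cases "j < length p")
      case True
      have "Suc j \<in> A \<longleftrightarrow> (\<forall>k<Suc j. s ! k > p ! j)"
        using True that sn[of "Suc j"] by (simp add: A_def ls)
      also have "\<dots> \<longleftrightarrow> (\<forall>z\<in>set (take (Suc j) s). z > p ! j)"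
        using True by (simp add: ls all_less_nth_iff_set_take)
      also have "\<dots> \<longleftrightarrow> (\<forall>z\<in>set (take j p). z > p ! j)"
        using True that i m by (simp add: s_def take_Suc_insert_at)
      also have "\<dots> \<longleftrightarrow> j \<in> B"
        using True by (simp add: B_def all_less_nth_iff_set_take)
      finally show ?thesis .
    qed (auto simp: A_def B_def ls)
  qed simp
  have "card (A \<inter> {i..i}) = (if i = 0 then 1 else 0)"
  proof (cases "i = 0")
    case False
    then have "p ! 0 \<in> set p" using i by (intro nth_mem) auto
    with False m have "s ! 0 < s ! i" by (auto simp: sn)
    with False show ?thesis by (auto simp: A_def)
  qed (simp add: A_def ls)
  with window show ?thesis by (simp add: s_def A_def B_def LRmin_def)
qed

lemma RLmin_insert_at:
  assumes i: "i \<le> length p" and m: "\<forall>x\<in>set p. x < m"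
  shows "RLmin (insert_at i m p) = RLmin p + (if i = length p then 1 else 0)"
  using LRmin_insert_at[of "length p - i" "rev p" m] assms
  by (simp add: RLmin_eq_LRmin_rev rev_insert_at)

section \<open>The insertion recurrence for the weight sum\<close>

definition perm_weight :: "'a::comm_ring_1 \<Rightarrow> 'a \<Rightarrow> 'a \<Rightarrow> 'a \<Rightarrow> nat list \<Rightarrow> 'a" where
  "perm_weight \<alpha> u v w s = u ^ peaks s * v ^ des s * w ^ asc s * \<alpha> ^ (LRmin s + RLmin s - 2)"

(* Inserting a new maximum into gap i of p: the end gaps add an extremal minimum and a descent
   resp. ascent; an interior ascent gap adds a descent and a peak, but a peak at position i of p is
   destroyed (symmetrically for descent gaps). *)
definition insertion_factor :: "'a::comm_ring_1 \<Rightarrow> 'a \<Rightarrow> 'a \<Rightarrow> 'a \<Rightarrow> nat list \<Rightarrow> nat \<Rightarrow> 'a" where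
  "insertion_factor \<alpha> u v w p i =
     (if i = 0 then v * \<alpha> else if i = length p then w * \<alpha>
      else if p ! (i-1) < p ! i then v * (if is_peak p i then 1 else u)
      else w * (if is_peak p (i-1) then 1 else u))"

lemma perm_weight_insert_at:
  assumes i: "i \<le> length p" and p: "p \<noteq> []" and m: "\<forall>x\<in>set p. x < m" and d: "distinct p"
  shows "perm_weight \<alpha> u v w (insert_at i m p) = perm_weight \<alpha> u v w p * insertion_factor \<alpha> u v w p i"
proof -
  define s where "s = insert_at i m p"
  have "distinct s" using m d by (auto simp: s_def distinct_insert_at)
  then have asc_des_s: "asc s + des s = length p" using asc_add_des[of s] i by (simp add: s_def)
  have asc_des_p: "asc p + des p = length p - 1" by (rule asc_add_des[OF d])
  note asc = asc_insert_at[OF i p m, folded s_def]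
  note peaks = peaks_insert_at[OF i p m, folded s_def]
  note LRmin = LRmin_insert_at[OF i m, folded s_def]
  note RLmin = RLmin_insert_at[OF i m, folded s_def]
  have pos: "0 < LRmin p" "0 < RLmin p" "0 < length p" using p by (simp_all add: LRmin_pos RLmin_pos)
  have no_end_peak: "\<not> is_peak p 0" "\<not> is_peak p (length p - 1)" "\<not> is_peak p (length p)"
    by (auto simp: is_peak_def)
  have "i = 0 \<or> 0 < i \<and> i = length p \<or> 0 < i \<and> i < length p \<and> p ! (i-1) \<noteq> p ! i"
    using i d by (auto simp: nth_eq_iff_index_eq)
  then consider (first) "i = 0" | (last) "0 < i" "i = length p"
    | (up) "0 < i" "i < length p" "p ! (i-1) < p ! i"
    | (down) "0 < i" "i < length p" "p ! (i-1) > p ! i"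
    by (auto simp: linorder_neq_iff)
  then show ?thesis
  proof cases
    case first
    then have "asc s = asc p" "des s = Suc (des p)" "peaks s = peaks p"
      "LRmin s + RLmin s - 2 = Suc (LRmin p + RLmin p - 2)"
      using asc asc_des_s asc_des_p peaks LRmin RLmin pos no_end_peak by (auto simp del: length_greater_0_conv)
    with first show ?thesis by (simp add: s_def perm_weight_def insertion_factor_def algebra_simps)
  next
    case last
    then have "asc s = Suc (asc p)" "des s = des p" "peaks s = peaks p"
      "LRmin s + RLmin s - 2 = Suc (LRmin p + RLmin p - 2)"
      using asc asc_des_s asc_des_p peaks LRmin RLmin pos no_end_peak by (auto simp del: length_greater_0_conv)
    with last show ?thesis by (simp add: s_def perm_weight_def insertion_factor_def algebra_simps)
  next
    case up
    then have "\<not> is_peak p (i-1)" by (auto simp: is_peak_def)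
    with up have "asc s = asc p" "des s = Suc (des p)"
      "peaks s = (if is_peak p i then peaks p else Suc (peaks p))"
      "LRmin s + RLmin s - 2 = LRmin p + RLmin p - 2"
      using asc asc_des_s asc_des_p peaks LRmin RLmin by auto
    with up show ?thesis by (simp add: s_def perm_weight_def insertion_factor_def algebra_simps)
  next
    case down
    then have "\<not> is_peak p i" by (auto simp: is_peak_def)
    with down have "asc s = Suc (asc p)" "des s = des p"
      "peaks s = (if is_peak p (i-1) then peaks p else Suc (peaks p))"
      "LRmin s + RLmin s - 2 = LRmin p + RLmin p - 2"
      using asc asc_des_s asc_des_p peaks LRmin RLmin by auto
    with down show ?thesis by (simp add: s_def perm_weight_def insertion_factor_def algebra_simps)
  qed
qed

lemma insertion_factor_interior:
  assumes "0 < i" "i < length p" "distinct p"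
  shows "insertion_factor \<alpha> u v w p i =
      (if p ! (i-1) < p ! i then u * v else 0) + (if p ! (i-1) > p ! i then u * w else 0)
      + (if is_peak p i then v - u * v else 0) + (if is_peak p (i-1) then w - u * w else 0)"
proof -
  have "p ! (i-1) \<noteq> p ! i" using assms by (simp add: nth_eq_iff_index_eq)
  moreover have "is_peak p i \<Longrightarrow> p ! (i-1) < p ! i" "is_peak p (i-1) \<Longrightarrow> p ! (i-1) > p ! i"
    using assms by (auto simp: is_peak_def)
  ultimately show ?thesis using assms by (auto simp: insertion_factor_def algebra_simps)
qed

lemma sum_insertion_factor:
  assumes p: "p \<noteq> []" and d: "distinct p"
  shows "(\<Sum>i\<le>length p. insertion_factor \<alpha> u v w p i)
     = \<alpha> * (v + w) + (v + w - u * v - u * w) * of_nat (peaks p)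
       + u * v * of_nat (asc p) + u * w * of_nat (des p)"
proof -
  define n where "n = length p"
  have n: "0 < n" using p by (simp add: n_def)
  have ascents: "card {i\<in>{1..<n}. p ! (i-1) < p ! i} = asc p"
    using card_filter_atLeastLessThan_shift[of n "\<lambda>a b. p ! a < p ! b"] by (simp add: asc_def n_def)
  have descents: "card {i\<in>{1..<n}. p ! (i-1) > p ! i} = des p"
    using card_filter_atLeastLessThan_shift[of n "\<lambda>a b. p ! a > p ! b"] by (simp add: des_def n_def)
  have "{i\<in>{1..<n}. is_peak p i} = {j. is_peak p j}" by (auto simp: is_peak_def n_def)
  then have peaks_right: "card {i\<in>{1..<n}. is_peak p i} = peaks p"
    by (simp add: peaks_eq_card_is_peak)
  have "{j. j + 1 < n \<and> is_peak p j} = {j. is_peak p j}" by (auto simp: is_peak_def n_def)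
  then have peaks_left: "card {i\<in>{1..<n}. is_peak p (i-1)} = peaks p"
    using card_filter_atLeastLessThan_shift[of n "\<lambda>a b. is_peak p a"] by (simp add: peaks_eq_card_is_peak)
  have "(\<Sum>i\<in>{1..<n}. insertion_factor \<alpha> u v w p i) = (\<Sum>i\<in>{1..<n}.
      (if p ! (i-1) < p ! i then u * v else 0) + (if p ! (i-1) > p ! i then u * w else 0)
      + (if is_peak p i then v - u * v else 0) + (if is_peak p (i-1) then w - u * w else 0))"
    using d by (intro sum.cong) (auto simp: n_def insertion_factor_interior)
  also have "\<dots> = of_nat (asc p) * (u * v) + of_nat (des p) * (u * w)
      + of_nat (peaks p) * (v - u * v) + of_nat (peaks p) * (w - u * w)"
    by (simp only: sum.distrib sum_if_const[OF finite_atLeastLessThan] ascents descents peaks_left peaks_right)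
  finally have interior: "(\<Sum>i\<in>{1..<n}. insertion_factor \<alpha> u v w p i) = \<dots>" .
  have "{..n} = insert 0 (insert n {1..<n})" using n by auto
  then have "(\<Sum>i\<le>n. insertion_factor \<alpha> u v w p i) = insertion_factor \<alpha> u v w p 0
      + insertion_factor \<alpha> u v w p n + (\<Sum>i\<in>{1..<n}. insertion_factor \<alpha> u v w p i)"
    using n by simp
  then show ?thesis
    unfolding interior using n by (simp add: insertion_factor_def n_def algebra_simps)
qed

lemma bij_betw_insert_at_permutations_of_set:
  assumes x: "x \<notin> A"
  shows "bij_betw (\<lambda>(p, i). insert_at i x p)
           (permutations_of_set A \<times> {..card A}) (permutations_of_set (insert x A))"
proof (rule bij_betw_imageI)
  note length = length_finite_permutations_of_set[of _ A]
  show "inj_on (\<lambda>(p, i). insert_at i x p) (permutations_of_set A \<times> {..card A})"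
  proof (rule inj_onI, clarsimp)
    fix p i q j assume "p \<in> permutations_of_set A" "q \<in> permutations_of_set A"
      "i \<le> card A" "j \<le> card A" "insert_at i x p = insert_at j x q"
    then show "p = q \<and> i = j"
      using insert_at_inject[of x p q i j] x length by (auto simp: permutations_of_set_def)
  qed
  show "(\<lambda>(p, i). insert_at i x p) ` (permutations_of_set A \<times> {..card A}) = permutations_of_set (insert x A)"
  proof
    show "(\<lambda>(p, i). insert_at i x p) ` (permutations_of_set A \<times> {..card A}) \<subseteq> permutations_of_set (insert x A)"
      using x by (auto simp: permutations_of_set_def distinct_insert_at)
    show "permutations_of_set (insert x A) \<subseteq> (\<lambda>(p, i). insert_at i x p) ` (permutations_of_set A \<times> {..card A})"
    proof
      fix s assume s: "s \<in> permutations_of_set (insert x A)"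
      then have "x \<in> set s" by (simp add: permutations_of_set_def)
      then obtain xs ys where s_split: "s = xs @ x # ys" by (meson split_list)
      with s x have p: "xs @ ys \<in> permutations_of_set A"
        by (auto simp: permutations_of_set_def)
      then have "(xs @ ys, length xs) \<in> permutations_of_set A \<times> {..card A}" using length[OF p] by simp
      then show "s \<in> (\<lambda>(p, i). insert_at i x p) ` (permutations_of_set A \<times> {..card A})"
        by (rule rev_image_eqI) (simp add: s_split)
    qed
  qed
qed

lemma sum_permutations_of_set_insert:
  assumes "x \<notin> A"
  shows "(\<Sum>s\<in>permutations_of_set (insert x A). f s)
       = (\<Sum>p\<in>permutations_of_set A. \<Sum>i\<le>card A. f (insert_at i x p))"
  using sum.reindex_bij_betw[OF bij_betw_insert_at_permutations_of_set[OF assms], of f]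
  by (simp add: sum.cartesian_product split_def)

lemma sum_perm_weight_Suc:
  assumes "1 \<le> n"
  shows "(\<Sum>s\<in>permutations_of_set {1..Suc n}. perm_weight \<alpha> u v w s)
   = (\<Sum>p\<in>permutations_of_set {1..n}. perm_weight \<alpha> u v w p *
       (\<alpha> * (v + w) + (v + w - u * v - u * w) * of_nat (peaks p)
        + u * v * of_nat (asc p) + u * w * of_nat (des p)))"
proof -
  have "{1..Suc n} = insert (Suc n) {1..n}" by auto
  then have "(\<Sum>s\<in>permutations_of_set {1..Suc n}. perm_weight \<alpha> u v w s)
      = (\<Sum>p\<in>permutations_of_set {1..n}. \<Sum>i\<le>n. perm_weight \<alpha> u v w (insert_at i (Suc n) p))"
    by (simp add: sum_permutations_of_set_insert)
  also have "\<dots> = (\<Sum>p\<in>permutations_of_set {1..n}. perm_weight \<alpha> u v w p *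
       (\<alpha> * (v + w) + (v + w - u * v - u * w) * of_nat (peaks p)
        + u * v * of_nat (asc p) + u * w * of_nat (des p)))"
  proof (rule sum.cong[OF refl])
    fix p assume p: "p \<in> permutations_of_set {1..n}"
    then have n: "n = length p" by (simp add: length_finite_permutations_of_set)
    have "p \<noteq> []" "\<forall>x\<in>set p. x < Suc n" "distinct p"
      using p assms by (auto simp: permutations_of_set_def)
    then show "(\<Sum>i\<le>n. perm_weight \<alpha> u v w (insert_at i (Suc n) p)) = perm_weight \<alpha> u v w p *
       (\<alpha> * (v + w) + (v + w - u * v - u * w) * of_nat (peaks p)
        + u * v * of_nat (asc p) + u * w * of_nat (des p))"
      unfolding n by (simp add: perm_weight_insert_at sum_distrib_left[symmetric] sum_insertion_factor)
  qed
  finally show ?thesis .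
qed

section \<open>The gamma polynomials\<close>

(* Coefficient form of the recurrence in gamma_poly_Suc. *)
fun gamma_coeff :: "'a::comm_ring_1 \<Rightarrow> nat \<Rightarrow> nat \<Rightarrow> 'a" where
  "gamma_coeff \<alpha> 0 k = (if k = 0 then 1 else 0)"
| "gamma_coeff \<alpha> (Suc n) 0 = \<alpha> * gamma_coeff \<alpha> n 0"
| "gamma_coeff \<alpha> (Suc n) (Suc k) =
     (\<alpha> + of_nat (Suc k)) * gamma_coeff \<alpha> n (Suc k) + 2 * of_nat (n - 2 * k) * gamma_coeff \<alpha> n k"

lemma gamma_coeff_eq_0: "n < 2 * k \<Longrightarrow> gamma_coeff \<alpha> n k = 0"
proof (induction n arbitrary: k)
  case (Suc n)
  then obtain j where k: "k = Suc j" by (cases k) auto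
  with Suc show ?case by (cases "n < 2 * j") auto
qed simp

definition gamma_poly :: "'a::comm_ring_1 \<Rightarrow> nat \<Rightarrow> 'a \<Rightarrow> 'a \<Rightarrow> 'a" where
  "gamma_poly \<alpha> n X Y = (\<Sum>k\<le>n. gamma_coeff \<alpha> n k * X ^ k * Y ^ (n - 2 * k))"

definition gamma_poly_dX :: "'a::comm_ring_1 \<Rightarrow> nat \<Rightarrow> 'a \<Rightarrow> 'a \<Rightarrow> 'a" where
  "gamma_poly_dX \<alpha> n X Y = (\<Sum>k\<le>n. gamma_coeff \<alpha> n k * of_nat k * X ^ (k - 1) * Y ^ (n - 2 * k))"

definition gamma_poly_dY :: "'a::comm_ring_1 \<Rightarrow> nat \<Rightarrow> 'a \<Rightarrow> 'a \<Rightarrow> 'a" where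
  "gamma_poly_dY \<alpha> n X Y =
     (\<Sum>k\<le>n. gamma_coeff \<alpha> n k * of_nat (n - 2 * k) * X ^ k * Y ^ (n - 2 * k - 1))"

lemma mult_of_nat_power_pred: "x * (of_nat k * x ^ (k - 1)) = of_nat k * (x::'a::comm_semiring_1) ^ k"
  by (cases k) (simp_all add: algebra_simps)

lemma mult_gamma_poly_dX:
  "X * gamma_poly_dX \<alpha> n X Y = (\<Sum>k\<le>n. of_nat k * gamma_coeff \<alpha> n k * X ^ k * Y ^ (n - 2 * k))"
  unfolding gamma_poly_dX_def sum_distrib_left
proof (rule sum.cong[OF refl])
  fix k
  show "X * (gamma_coeff \<alpha> n k * of_nat k * X ^ (k - 1) * Y ^ (n - 2 * k))
      = of_nat k * gamma_coeff \<alpha> n k * X ^ k * Y ^ (n - 2 * k)"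
    by (cases k) (simp_all add: algebra_simps)
qed

lemma has_field_derivative_gamma_poly:
  fixes f g :: "'a::real_normed_field \<Rightarrow> 'a"
  assumes "(f has_field_derivative f') (at t)" and "(g has_field_derivative g') (at t)"
  shows "((\<lambda>t. gamma_poly \<alpha> n (f t) (g t)) has_field_derivative
           f' * gamma_poly_dX \<alpha> n (f t) (g t) + g' * gamma_poly_dY \<alpha> n (f t) (g t)) (at t)"
  unfolding gamma_poly_def gamma_poly_dX_def gamma_poly_dY_def sum_distrib_left sum.distrib[symmetric]
  by (rule derivative_eq_intros assms refl)+ (simp add: algebra_simps)

lemma gamma_poly_Suc:
  "gamma_poly \<alpha> (Suc n) X Y =
     \<alpha> * Y * gamma_poly \<alpha> n X Y + Y * (X * gamma_poly_dX \<alpha> n X Y) + 2 * X * gamma_poly_dY \<alpha> n X Y"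
proof -
  define h where "h k = (\<alpha> + of_nat k) * gamma_coeff \<alpha> n k * X ^ k * Y ^ (Suc n - 2 * k)" for k
  have "gamma_poly \<alpha> (Suc n) X Y
      = gamma_coeff \<alpha> (Suc n) 0 * Y ^ Suc n
        + (\<Sum>k\<le>n. gamma_coeff \<alpha> (Suc n) (Suc k) * X ^ Suc k * Y ^ (Suc n - 2 * Suc k))"
    unfolding gamma_poly_def by (subst sum.atMost_Suc_shift) simp
  also have "\<dots> = h 0 + (\<Sum>k\<le>n. h (Suc k))
      + (\<Sum>k\<le>n. 2 * of_nat (n - 2 * k) * gamma_coeff \<alpha> n k * X * X ^ k * Y ^ (n - 2 * k - 1))"
    by (simp add: h_def sum.distrib algebra_simps)
  also have "h 0 + (\<Sum>k\<le>n. h (Suc k)) = (\<Sum>k\<le>Suc n. h k)"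
    by (subst sum.atMost_Suc_shift) simp
  also have "\<dots> = (\<Sum>k\<le>n. h k)"
    using gamma_coeff_eq_0[of n "Suc n" \<alpha>] by (simp add: h_def)
  also have "\<dots> = (\<Sum>k\<le>n. (\<alpha> + of_nat k) * gamma_coeff \<alpha> n k * X ^ k * Y ^ (n - 2 * k) * Y)"
  proof (rule sum.cong[OF refl])
    fix k
    show "h k = (\<alpha> + of_nat k) * gamma_coeff \<alpha> n k * X ^ k * Y ^ (n - 2 * k) * Y"
    proof (cases "2 * k \<le> n")
      case True
      then have "Suc n - 2 * k = Suc (n - 2 * k)" by arith
      then show ?thesis by (simp add: h_def algebra_simps)
    qed (simp add: h_def gamma_coeff_eq_0)
  qed
  also have "(\<Sum>k\<le>n. (\<alpha> + of_nat k) * gamma_coeff \<alpha> n k * X ^ k * Y ^ (n - 2 * k) * Y)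
      + (\<Sum>k\<le>n. 2 * of_nat (n - 2 * k) * gamma_coeff \<alpha> n k * X * X ^ k * Y ^ (n - 2 * k - 1))
      = \<alpha> * Y * gamma_poly \<alpha> n X Y + Y * (X * gamma_poly_dX \<alpha> n X Y) + 2 * X * gamma_poly_dY \<alpha> n X Y"
    unfolding gamma_poly_def mult_gamma_poly_dX gamma_poly_dY_def sum_distrib_left sum.distrib[symmetric]
    by (rule sum.cong) (simp_all add: algebra_simps)
  finally show ?thesis .
qed

lemma sum_of_nat_exponent_mult_eq_deriv:
  fixes t :: "'a::real_normed_field"
  assumes "\<And>t. (\<Sum>s\<in>S. t ^ e s * c s) = g t" and "(g has_field_derivative g') (at t)"
  shows "(\<Sum>s\<in>S. of_nat (e s) * t ^ e s * c s) = t * g'"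
proof -
  have "((\<lambda>t. \<Sum>s\<in>S. t ^ e s * c s) has_field_derivative (\<Sum>s\<in>S. of_nat (e s) * t ^ (e s - 1) * c s)) (at t)"
    by (auto intro!: derivative_eq_intros)
  moreover have "(\<lambda>t. \<Sum>s\<in>S. t ^ e s * c s) = g" using assms(1) by auto
  ultimately have "g' = (\<Sum>s\<in>S. of_nat (e s) * t ^ (e s - 1) * c s)"
    using assms(2) DERIV_unique by metis
  then have "t * g' = (\<Sum>s\<in>S. t * (of_nat (e s) * t ^ (e s - 1)) * c s)"
    by (simp add: sum_distrib_left mult.assoc)
  then show ?thesis by (simp only: mult_of_nat_power_pred)
qed

lemma statistic_weighted_sums:
  fixes \<alpha> u v w :: "'a::real_normed_field"
  assumes G: "\<And>u v w. (\<Sum>s\<in>S. perm_weight \<alpha> u v w s) = gamma_poly \<alpha> n (u * v * w) (v + w)"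
  defines "GX \<equiv> gamma_poly_dX \<alpha> n (u * v * w) (v + w)" and "GY \<equiv> gamma_poly_dY \<alpha> n (u * v * w) (v + w)"
  shows "(\<Sum>s\<in>S. of_nat (peaks s) * perm_weight \<alpha> u v w s) = u * (v * w * GX + 0 * GY)"
    and "(\<Sum>s\<in>S. of_nat (asc s) * perm_weight \<alpha> u v w s) = w * (u * v * GX + 1 * GY)"
    and "(\<Sum>s\<in>S. of_nat (des s) * perm_weight \<alpha> u v w s) = v * (u * w * GX + 1 * GY)"
proof -
  have "(\<Sum>s\<in>S. t ^ peaks s * (v ^ des s * w ^ asc s * \<alpha> ^ (LRmin s + RLmin s - 2)))
      = gamma_poly \<alpha> n (t * v * w) (v + w)" for t
    using G[of t v w] by (simp add: perm_weight_def mult.assoc)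
  then have "(\<Sum>s\<in>S. of_nat (peaks s) * u ^ peaks s * (v ^ des s * w ^ asc s * \<alpha> ^ (LRmin s + RLmin s - 2))) = u * (v * w * GX + 0 * GY)"
    unfolding GX_def GY_def
    by (rule sum_of_nat_exponent_mult_eq_deriv)
      (rule has_field_derivative_gamma_poly; auto intro!: derivative_eq_intros)
  then show "(\<Sum>s\<in>S. of_nat (peaks s) * perm_weight \<alpha> u v w s) = u * (v * w * GX + 0 * GY)"
    by (simp add: perm_weight_def ac_simps)
  have "(\<Sum>s\<in>S. t ^ asc s * (u ^ peaks s * v ^ des s * \<alpha> ^ (LRmin s + RLmin s - 2)))
      = gamma_poly \<alpha> n (u * v * t) (v + t)" for t
    using G[of u v t] by (simp add: perm_weight_def ac_simps)
  then have "(\<Sum>s\<in>S. of_nat (asc s) * w ^ asc s * (u ^ peaks s * v ^ des s * \<alpha> ^ (LRmin s + RLmin s - 2))) = w * (u * v * GX + 1 * GY)"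
    unfolding GX_def GY_def
    by (rule sum_of_nat_exponent_mult_eq_deriv)
      (rule has_field_derivative_gamma_poly; auto intro!: derivative_eq_intros)
  then show "(\<Sum>s\<in>S. of_nat (asc s) * perm_weight \<alpha> u v w s) = w * (u * v * GX + 1 * GY)"
    by (simp add: perm_weight_def ac_simps)
  have "(\<Sum>s\<in>S. t ^ des s * (u ^ peaks s * w ^ asc s * \<alpha> ^ (LRmin s + RLmin s - 2)))
      = gamma_poly \<alpha> n (u * t * w) (t + w)" for t
    using G[of u t w] by (simp add: perm_weight_def ac_simps)
  then have "(\<Sum>s\<in>S. of_nat (des s) * v ^ des s * (u ^ peaks s * w ^ asc s * \<alpha> ^ (LRmin s + RLmin s - 2))) = v * (u * w * GX + 1 * GY)"
    unfolding GX_def GY_def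
    by (rule sum_of_nat_exponent_mult_eq_deriv)
      (rule has_field_derivative_gamma_poly; auto intro!: derivative_eq_intros)
  then show "(\<Sum>s\<in>S. of_nat (des s) * perm_weight \<alpha> u v w s) = v * (u * w * GX + 1 * GY)"
    by (simp add: perm_weight_def ac_simps)
qed

lemma perm_weight_singleton: "perm_weight \<alpha> u v w [x] = 1"
proof -
  have "{i. i < length [x] \<and> (\<forall>j<i. [x] ! j > [x] ! i)} = {0}" by auto
  then have "LRmin [x] = 1" "RLmin [x] = 1" by (simp_all add: LRmin_def RLmin_eq_LRmin_rev)
  moreover have "peaks [x] = 0" "des [x] = 0" "asc [x] = 0"
    by (simp_all add: peaks_def des_def asc_def)
  ultimately show ?thesis by (simp add: perm_weight_def)
qed

lemma sum_perm_weight_eq_gamma_poly: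
  fixes \<alpha> u v w :: "'a::real_normed_field"
  shows "(\<Sum>s\<in>permutations_of_set {1..Suc n}. perm_weight \<alpha> u v w s) = gamma_poly \<alpha> n (u * v * w) (v + w)"
proof (induction n arbitrary: u v w)
  case 0
  then show ?case by (simp add: perm_weight_singleton gamma_poly_def)
next
  case (Suc n)
  define S where "S = permutations_of_set {1..Suc n}"
  define X where "X = u * v * w"
  define Y where "Y = v + w"
  note sums = statistic_weighted_sums[OF Suc.IH[folded S_def], of u v w, folded X_def Y_def]
  have "(\<Sum>s\<in>permutations_of_set {1..Suc (Suc n)}. perm_weight \<alpha> u v w s)
      = (\<Sum>s\<in>S. perm_weight \<alpha> u v w s * (\<alpha> * Y + (Y - u * v - u * w) * of_nat (peaks s)
          + u * v * of_nat (asc s) + u * w * of_nat (des s)))"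
    unfolding S_def Y_def by (rule sum_perm_weight_Suc) simp
  also have "\<dots> = \<alpha> * Y * (\<Sum>s\<in>S. perm_weight \<alpha> u v w s)
      + (Y - u * v - u * w) * (\<Sum>s\<in>S. of_nat (peaks s) * perm_weight \<alpha> u v w s)
      + u * v * (\<Sum>s\<in>S. of_nat (asc s) * perm_weight \<alpha> u v w s)
      + u * w * (\<Sum>s\<in>S. of_nat (des s) * perm_weight \<alpha> u v w s)"
    unfolding sum_distrib_left sum.distrib[symmetric] by (rule sum.cong) (simp_all add: algebra_simps)
  also have "\<dots> = gamma_poly \<alpha> (Suc n) X Y"
    unfolding sums Suc.IH[folded S_def] gamma_poly_Suc X_def Y_def by (simp add: algebra_simps)
  finally show ?case unfolding X_def Y_def .
qed

lemma csqrt_quadratic_roots: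
  fixes b c :: complex
  defines "r \<equiv> csqrt (b\<^sup>2 - 4 * c)"
  shows "(b - r) / 2 + (b + r) / 2 = b" and "(b - r) / 2 * ((b + r) / 2) = c"
proof -
  have "r\<^sup>2 = b\<^sup>2 - 4 * c" unfolding r_def by (rule power2_csqrt)
  then show "(b - r) / 2 * ((b + r) / 2) = c" by (simp add: field_simps power2_eq_square)
qed (simp add: field_simps)

theorem theorem6p4:
  fixes n :: nat and u v w \<alpha> :: complex
  assumes "n \<ge> 1"
  defines "x \<equiv> ((w + v) - csqrt ((w + v)\<^sup>2 - 4 * u * v * w)) / 2"
      and "y \<equiv> ((w + v) + csqrt ((w + v)\<^sup>2 - 4 * u * v * w)) / 2"
  shows "(\<Sum>s\<in>permutations_of_set {1..n}.
            u ^ peaks s * v ^ des s * w ^ asc s * \<alpha> ^ (LRmin s + RLmin s - 2))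
       = (\<Sum>s\<in>permutations_of_set {1..n}.
            x ^ des s * y ^ asc s * \<alpha> ^ (LRmin s + RLmin s - 2))"
proof -
  obtain m where n: "n = Suc m" using assms(1) by (cases n) auto
  have "x + y = v + w" "1 * x * y = u * v * w"
    using csqrt_quadratic_roots[of "w + v" "u * v * w"] by (simp_all add: x_def y_def mult.assoc add.commute)
  then have "gamma_poly \<alpha> m (u * v * w) (v + w) = gamma_poly \<alpha> m (1 * x * y) (x + y)" by simp
  then have "(\<Sum>s\<in>permutations_of_set {1..n}. perm_weight \<alpha> u v w s)
      = (\<Sum>s\<in>permutations_of_set {1..n}. perm_weight \<alpha> 1 x y s)"
    unfolding n sum_perm_weight_eq_gamma_poly .
  then show ?thesis by (simp add: perm_weight_def)
qed

end
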